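(* Let $G$ be a finitely generated group satisfying Kůrka's dichotomy, and let $H$ be a finitely generated subgroup of $G$. Then $H$ satisfies Kůrka's dichotomy.
   Context: For a finitely generated group $\Gamma$ with finite generating set $E$ closed under inverses, let $d_E$ be the word metric and define the Cantor metric on $A^\Gamma$ ($A$ a finite alphabet) by $d^E(x,y)=2^{-k}$ with $k=\min\{d_E(1,g): x(g)\neq y(g)\}$; $B^E(x,r)$ is its closed ball. A cellular automaton (CA) on $\Gamma$ with alphabet $A$ is a map $\Phi:A^\Gamma\to A^\Gamma$ given by a finite $S\subseteq\Gamma$ and $\mu:A^S\to A$ via $\Phi(x)(g)=\mu(s\mapsto x(gs))$. $x$ is an equicontinuity point of $\Phi$ if $\forall\epsilon>0\,\exists\delta>0\,\forall t\in\mathbb{N}$, $\Phi^t(B^E(x,\delta))\subseteq B^E(\Phi^t(x),\epsilon)$. $\Phi$ is sensitive to initial conditions if $\exists\epsilon>0\,\forall x\,\forall\delta>0\,\exists t\in\mathbb{N}\,\exists y\in B^E(x,\delta)$ with $\Phi^t(y)\notin B^E(\Phi^t(x),\epsilon)$. These notions do not depend on $E$. The group $\Gamma$ satisfies Kůrka's dichotomy if for every finite alphabet $A$, every CA on $\Gamma$ that is not sensitive to initial conditions has an equicontinuity point (equivalently: a CA on $\Gamma$ is sensitive iff it has no equicontinuity point). *)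

theory Defs
  imports Complex_Main "HOL-Algebra.Generated_Groups" "HOL-Library.FuncSet"
begin

definition sym_fin_gen :: "('g, 'b) monoid_scheme \<Rightarrow> 'g set \<Rightarrow> bool" where
  "sym_fin_gen G E \<longleftrightarrow> finite E \<and> E \<subseteq> carrier G \<and> (\<forall>e\<in>E. inv\<^bsub>G\<^esub> e \<in> E)
      \<and> generate G E = carrier G"

definition fin_gen_group :: "('g, 'b) monoid_scheme \<Rightarrow> bool" where
  "fin_gen_group G \<longleftrightarrow> group G \<and> (\<exists>E. sym_fin_gen G E)"

definition word_len :: "('g, 'b) monoid_scheme \<Rightarrow> 'g set \<Rightarrow> 'g \<Rightarrow> nat" where
  "word_len G E g = (LEAST n. \<exists>ws. set ws \<subseteq> E \<and> length ws = n
                         \<and> foldr (\<lambda>a b. a \<otimes>\<^bsub>G\<^esub> b) ws \<one>\<^bsub>G\<^esub> = g)"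

text \<open>Configurations A^Gamma: extensional functions on the carrier. Alphabets are
  finite sets of naturals (every finite alphabet is in bijection with one).\<close>
definition configs :: "('g, 'b) monoid_scheme \<Rightarrow> nat set \<Rightarrow> ('g \<Rightarrow> nat) set" where
  "configs G A = carrier G \<rightarrow>\<^sub>E A"

definition cantor_dist :: "('g, 'b) monoid_scheme \<Rightarrow> 'g set \<Rightarrow> ('g \<Rightarrow> nat) \<Rightarrow> ('g \<Rightarrow> nat) \<Rightarrow> real" where
  "cantor_dist G E x y =
     (if \<forall>g\<in>carrier G. x g = y g then 0
      else (1/2) ^ (LEAST k. \<exists>g\<in>carrier G. x g \<noteq> y g \<and> word_len G E g = k))"

definition cball_E :: "('g, 'b) monoid_scheme \<Rightarrow> 'g set \<Rightarrow> nat set \<Rightarrow> ('g \<Rightarrow> nat) \<Rightarrow> real \<Rightarrow> ('g \<Rightarrow> nat) set" where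
  "cball_E G E A x r = {y \<in> configs G A. cantor_dist G E x y \<le> r}"

definition local_rule :: "('g, 'b) monoid_scheme \<Rightarrow> nat set \<Rightarrow> 'g set \<Rightarrow> (('g \<Rightarrow> nat) \<Rightarrow> nat) \<Rightarrow> bool" where
  "local_rule G A S \<mu> \<longleftrightarrow> finite S \<and> S \<subseteq> carrier G \<and> \<mu> \<in> (S \<rightarrow>\<^sub>E A) \<rightarrow> A"

definition CA :: "('g, 'b) monoid_scheme \<Rightarrow> 'g set \<Rightarrow> (('g \<Rightarrow> nat) \<Rightarrow> nat) \<Rightarrow> ('g \<Rightarrow> nat) \<Rightarrow> ('g \<Rightarrow> nat)" where
  "CA G S \<mu> x = (\<lambda>g\<in>carrier G. \<mu> (\<lambda>s\<in>S. x (g \<otimes>\<^bsub>G\<^esub> s)))"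

definition equicont_point ::
  "('g, 'b) monoid_scheme \<Rightarrow> 'g set \<Rightarrow> nat set \<Rightarrow> (('g \<Rightarrow> nat) \<Rightarrow> ('g \<Rightarrow> nat)) \<Rightarrow> ('g \<Rightarrow> nat) \<Rightarrow> bool" where
  "equicont_point G E A \<Phi> x \<longleftrightarrow>
     (\<forall>\<epsilon>>0. \<exists>\<delta>>0. \<forall>t::nat. (\<Phi> ^^ t) ` cball_E G E A x \<delta> \<subseteq> cball_E G E A ((\<Phi> ^^ t) x) \<epsilon>)"

definition sensitive ::
  "('g, 'b) monoid_scheme \<Rightarrow> 'g set \<Rightarrow> nat set \<Rightarrow> (('g \<Rightarrow> nat) \<Rightarrow> ('g \<Rightarrow> nat)) \<Rightarrow> bool" where
  "sensitive G E A \<Phi> \<longleftrightarrow>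
     (\<exists>\<epsilon>>0. \<forall>x\<in>configs G A. \<forall>\<delta>>0. \<exists>t::nat. \<exists>y\<in>cball_E G E A x \<delta>.
         (\<Phi> ^^ t) y \<notin> cball_E G E A ((\<Phi> ^^ t) x) \<epsilon>)"

text \<open>Kurka's dichotomy (stated for every symmetric finite generating set E; the notions
  are independent of E).\<close>
definition kurka_dichotomy :: "('g, 'b) monoid_scheme \<Rightarrow> bool" where
  "kurka_dichotomy G \<longleftrightarrow>
     (\<forall>A E S \<mu>. finite A \<and> sym_fin_gen G E \<and> local_rule G A S \<mu> \<and>
        \<not> sensitive G E A (CA G S \<mu>) \<longrightarrow>
        (\<exists>x\<in>configs G A. equicont_point G E A (CA G S \<mu>) x))"

end

theory Submission
  imports Defs
begin

(* Equicontinuity points and non-sensitivity have finitary descriptions: x is an equicontinuity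
   point iff for every finite window F there is a finite D such that every configuration agreeing
   with x on D has all its iterates agreeing with those of x on F; non-sensitivity is the same
   statement with x allowed to depend on F.  These descriptions mention no generating set, so they
   can be compared between G and H.
   A CA whose neighbourhood S lies in H acts on each left coset rH separately, as a translated copy
   of the CA on H.  Hence non-sensitivity passes from H to G: a finite window meets finitely many
   cosets, and witnesses for the pieces, glued along coset representatives, form a witness on G.
   Kurka's dichotomy for G then gives an equicontinuity point x on G, and its restriction to H is
   an equicontinuity point on H, since a perturbation on H extends by x to a perturbation on G. *)

definition agree_on :: "'g set \<Rightarrow> ('g \<Rightarrow> nat) \<Rightarrow> ('g \<Rightarrow> nat) \<Rightarrow> bool" where
  "agree_on D x y \<longleftrightarrow> (\<forall>g\<in>D. x g = y g)"

definition window_stable ::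
  "('g, 'b) monoid_scheme \<Rightarrow> nat set \<Rightarrow> (('g \<Rightarrow> nat) \<Rightarrow> ('g \<Rightarrow> nat)) \<Rightarrow> ('g \<Rightarrow> nat)
     \<Rightarrow> 'g set \<Rightarrow> 'g set \<Rightarrow> bool" where
  "window_stable K A \<Phi> x D F \<longleftrightarrow>
     (\<forall>t. \<forall>y\<in>configs K A. agree_on D x y \<longrightarrow> agree_on F ((\<Phi> ^^ t) x) ((\<Phi> ^^ t) y))"

definition finitary_equicont_point ::
  "('g, 'b) monoid_scheme \<Rightarrow> nat set \<Rightarrow> (('g \<Rightarrow> nat) \<Rightarrow> ('g \<Rightarrow> nat)) \<Rightarrow> ('g \<Rightarrow> nat) \<Rightarrow> bool" where
  "finitary_equicont_point K A \<Phi> x \<longleftrightarrow>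
     (\<forall>F. finite F \<and> F \<subseteq> carrier K \<longrightarrow>
        (\<exists>D. finite D \<and> D \<subseteq> carrier K \<and> window_stable K A \<Phi> x D F))"

definition finitary_nonsensitive ::
  "('g, 'b) monoid_scheme \<Rightarrow> nat set \<Rightarrow> (('g \<Rightarrow> nat) \<Rightarrow> ('g \<Rightarrow> nat)) \<Rightarrow> bool" where
  "finitary_nonsensitive K A \<Phi> \<longleftrightarrow>
     (\<forall>F. finite F \<and> F \<subseteq> carrier K \<longrightarrow>
        (\<exists>x\<in>configs K A. \<exists>D. finite D \<and> D \<subseteq> carrier K \<and> window_stable K A \<Phi> x D F))"

lemma agree_on_subset: "agree_on F x y \<Longrightarrow> D \<subseteq> F \<Longrightarrow> agree_on D x y"
  unfolding agree_on_def by auto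

lemma window_stable_mono:
  "window_stable K A \<Phi> x D F \<Longrightarrow> D \<subseteq> D' \<Longrightarrow> F' \<subseteq> F \<Longrightarrow> window_stable K A \<Phi> x D' F'"
  unfolding window_stable_def agree_on_def by blast

lemma window_stable_UN:
  "(\<And>i. i \<in> I \<Longrightarrow> window_stable K A \<Phi> x (D i) (F i))
     \<Longrightarrow> window_stable K A \<Phi> x (\<Union>i\<in>I. D i) (\<Union>i\<in>I. F i)"
  unfolding window_stable_def agree_on_def by blast

lemma funpow_funcset: "f \<in> X \<rightarrow> X \<Longrightarrow> (f ^^ n) \<in> X \<rightarrow> X"
  by (induction n) auto

lemma half_power_le: "(\<epsilon>::real) > 0 \<Longrightarrow> \<exists>k. (1/2) ^ k \<le> \<epsilon>"
  using real_arch_pow_inv[of \<epsilon> "1/2"] by (auto intro: less_imp_le)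

lemma all_pos_iff_all_half_powers:
  assumes mono: "\<And>r s. P r \<Longrightarrow> r \<le> s \<Longrightarrow> P s"
  shows "(\<forall>\<epsilon>>0. P \<epsilon>) \<longleftrightarrow> (\<forall>k. P ((1/2::real) ^ k))"
  using half_power_le mono by (metis zero_less_divide_1_iff zero_less_numeral zero_less_power)

definition word_ball :: "('g, 'b) monoid_scheme \<Rightarrow> 'g set \<Rightarrow> nat \<Rightarrow> 'g set" where
  "word_ball K E k = {g \<in> carrier K. word_len K E g < k}"

lemma cantor_dist_le_half_power_iff:
  "cantor_dist K E x y \<le> (1/2) ^ k \<longleftrightarrow> agree_on (word_ball K E k) x y"
proof (cases "\<forall>g\<in>carrier K. x g = y g")
  case True
  then show ?thesis by (simp add: cantor_dist_def agree_on_def word_ball_def)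
next
  case False
  define P where "P m \<longleftrightarrow> (\<exists>g\<in>carrier K. x g \<noteq> y g \<and> word_len K E g = m)" for m
  have "\<exists>m. P m" using False unfolding P_def by auto
  then have "k \<le> Least P \<longleftrightarrow> (\<forall>m<k. \<not> P m)"
    by (meson LeastI_ex not_le not_less_Least order_less_le_trans)
  moreover have "cantor_dist K E x y = (1/2) ^ Least P"
    using False unfolding cantor_dist_def P_def by simp
  ultimately show ?thesis
    unfolding P_def agree_on_def word_ball_def by auto
qed

lemma mem_cball_E_half_power_iff:
  "y \<in> cball_E K E A x ((1/2) ^ k) \<longleftrightarrow> y \<in> configs K A \<and> agree_on (word_ball K E k) x y"
  unfolding cball_E_def cantor_dist_le_half_power_iff by simp

lemma cball_E_mono: "r \<le> s \<Longrightarrow> cball_E K E A x r \<subseteq> cball_E K E A x s"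
  unfolding cball_E_def by auto

lemma finite_subset_word_ball: "finite F \<Longrightarrow> F \<subseteq> carrier K \<Longrightarrow> \<exists>k. F \<subseteq> word_ball K E k"
  using finite_nat_set_iff_bounded[of "word_len K E ` F"] unfolding word_ball_def by auto

lemma (in monoid) foldr_mult_closed: "set ws \<subseteq> carrier G \<Longrightarrow> foldr (\<otimes>) ws \<one> \<in> carrier G"
  by (induction ws) auto

lemma (in monoid) foldr_mult_shift:
  "set ws \<subseteq> carrier G \<Longrightarrow> z \<in> carrier G \<Longrightarrow> foldr (\<otimes>) ws z = foldr (\<otimes>) ws \<one> \<otimes> z"
  by (induction ws) (auto simp: m_assoc foldr_mult_closed)

lemma (in group) generate_imp_word_product:
  assumes "E \<subseteq> carrier G" "\<And>e. e \<in> E \<Longrightarrow> inv e \<in> E" "g \<in> generate G E"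
  shows "\<exists>ws. set ws \<subseteq> E \<and> foldr (\<otimes>) ws \<one> = g"
  using assms(3)
proof (induction rule: generate.induct)
  case one
  show ?case by (intro exI[of _ "[]"]) auto
next
  case (incl h)
  then show ?case using assms(1) by (intro exI[of _ "[h]"]) auto
next
  case (inv h)
  then show ?case using assms by (intro exI[of _ "[inv h]"]) auto
next
  case (eng h1 h2)
  then obtain w1 w2 where "set w1 \<subseteq> E" "foldr (\<otimes>) w1 \<one> = h1" "set w2 \<subseteq> E" "foldr (\<otimes>) w2 \<one> = h2"
    by blast
  with assms(1) show ?case
    using foldr_mult_shift[of w1 "foldr (\<otimes>) w2 \<one>"] foldr_mult_closed[of w2]
    by (intro exI[of _ "w1 @ w2"]) auto
qed

lemma (in group) finite_word_ball:
  assumes "sym_fin_gen G E"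
  shows "finite (word_ball G E k)"
proof -
  have E: "finite E" "E \<subseteq> carrier G" "\<And>e. e \<in> E \<Longrightarrow> inv e \<in> E" "generate G E = carrier G"
    using assms unfolding sym_fin_gen_def by auto
  have "word_ball G E k \<subseteq> (\<lambda>ws. foldr (\<otimes>) ws \<one>) ` {ws. set ws \<subseteq> E \<and> length ws \<le> k}"
  proof
    fix g assume g: "g \<in> word_ball G E k"
    then have "\<exists>n ws. set ws \<subseteq> E \<and> length ws = n \<and> foldr (\<otimes>) ws \<one> = g"
      using generate_imp_word_product[OF E(2,3)] E(4) unfolding word_ball_def by blast
    then have "\<exists>ws. set ws \<subseteq> E \<and> length ws = word_len G E g \<and> foldr (\<otimes>) ws \<one> = g"
      unfolding word_len_def by (rule LeastI_ex)
    then show "g \<in> (\<lambda>ws. foldr (\<otimes>) ws \<one>) ` {ws. set ws \<subseteq> E \<and> length ws \<le> k}"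
      using g unfolding word_ball_def by force
  qed
  then show ?thesis
    using finite_lists_length_le[OF E(1)] finite_subset by blast
qed

lemma (in group) all_word_balls_iff_all_finite:
  assumes "sym_fin_gen G E" and antitone: "\<And>F F'. Q F \<Longrightarrow> F' \<subseteq> F \<Longrightarrow> Q F'"
  shows "(\<forall>k. Q (word_ball G E k)) \<longleftrightarrow> (\<forall>F. finite F \<and> F \<subseteq> carrier G \<longrightarrow> Q F)"
proof
  assume "\<forall>k. Q (word_ball G E k)"
  then show "\<forall>F. finite F \<and> F \<subseteq> carrier G \<longrightarrow> Q F"
    using finite_subset_word_ball antitone by metis
next
  assume "\<forall>F. finite F \<and> F \<subseteq> carrier G \<longrightarrow> Q F"
  then show "\<forall>k. Q (word_ball G E k)"
    using finite_word_ball[OF assms(1)] by (simp add: word_ball_def)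
qed

lemma (in group) ball_stable_iff_window_stable:
  assumes E: "sym_fin_gen G E" and \<Phi>: "\<Phi> \<in> configs G A \<rightarrow> configs G A"
  shows "(\<exists>\<delta>>0. \<forall>t. (\<Phi> ^^ t) ` cball_E G E A x \<delta> \<subseteq> cball_E G E A ((\<Phi> ^^ t) x) ((1/2) ^ k))
    \<longleftrightarrow> (\<exists>D. finite D \<and> D \<subseteq> carrier G \<and> window_stable G A \<Phi> x D (word_ball G E k))"
proof
  assume "\<exists>\<delta>>0. \<forall>t. (\<Phi> ^^ t) ` cball_E G E A x \<delta> \<subseteq> cball_E G E A ((\<Phi> ^^ t) x) ((1/2) ^ k)"
  then obtain \<delta> where "\<delta> > 0"
    and stable: "\<forall>t. (\<Phi> ^^ t) ` cball_E G E A x \<delta> \<subseteq> cball_E G E A ((\<Phi> ^^ t) x) ((1/2) ^ k)"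
    by blast
  then obtain j where "(1/2) ^ j \<le> \<delta>" using half_power_le by blast
  then have ball: "cball_E G E A x ((1/2) ^ j) \<subseteq> cball_E G E A x \<delta>" by (rule cball_E_mono)
  have "window_stable G A \<Phi> x (word_ball G E j) (word_ball G E k)"
    unfolding window_stable_def
  proof (intro allI ballI impI)
    fix t y assume "y \<in> configs G A" "agree_on (word_ball G E j) x y"
    then have "y \<in> cball_E G E A x \<delta>" using ball mem_cball_E_half_power_iff by blast
    then have "(\<Phi> ^^ t) y \<in> cball_E G E A ((\<Phi> ^^ t) x) ((1/2) ^ k)" using stable by blast
    then show "agree_on (word_ball G E k) ((\<Phi> ^^ t) x) ((\<Phi> ^^ t) y)"
      by (simp add: mem_cball_E_half_power_iff)
  qed
  then show "\<exists>D. finite D \<and> D \<subseteq> carrier G \<and> window_stable G A \<Phi> x D (word_ball G E k)"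
    using finite_word_ball[OF E] by (auto simp: word_ball_def)
next
  assume "\<exists>D. finite D \<and> D \<subseteq> carrier G \<and> window_stable G A \<Phi> x D (word_ball G E k)"
  then obtain D j where stable: "window_stable G A \<Phi> x D (word_ball G E k)"
    and D: "D \<subseteq> word_ball G E j"
    using finite_subset_word_ball by metis
  have "(\<Phi> ^^ t) ` cball_E G E A x ((1/2) ^ j) \<subseteq> cball_E G E A ((\<Phi> ^^ t) x) ((1/2) ^ k)" for t
  proof
    fix z assume "z \<in> (\<Phi> ^^ t) ` cball_E G E A x ((1/2) ^ j)"
    then obtain y where y: "y \<in> configs G A" "agree_on (word_ball G E j) x y" and z: "z = (\<Phi> ^^ t) y"
      by (auto simp: mem_cball_E_half_power_iff)
    have "agree_on (word_ball G E k) ((\<Phi> ^^ t) x) z"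
      using stable y D z agree_on_subset unfolding window_stable_def by blast
    moreover have "z \<in> configs G A" using funpow_funcset[OF \<Phi>] y z by blast
    ultimately show "z \<in> cball_E G E A ((\<Phi> ^^ t) x) ((1/2) ^ k)"
      by (simp add: mem_cball_E_half_power_iff)
  qed
  then show "\<exists>\<delta>>0. \<forall>t. (\<Phi> ^^ t) ` cball_E G E A x \<delta> \<subseteq> cball_E G E A ((\<Phi> ^^ t) x) ((1/2) ^ k)"
    by (intro exI[of _ "(1/2) ^ j"]) auto
qed

lemma (in group) equicont_point_iff_finitary:
  assumes E: "sym_fin_gen G E" and \<Phi>: "\<Phi> \<in> configs G A \<rightarrow> configs G A"
  shows "equicont_point G E A \<Phi> x \<longleftrightarrow> finitary_equicont_point G A \<Phi> x"
proof -
  let ?stable = "\<lambda>\<delta> \<epsilon>. \<forall>t. (\<Phi> ^^ t) ` cball_E G E A x \<delta> \<subseteq> cball_E G E A ((\<Phi> ^^ t) x) \<epsilon>"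
  have "equicont_point G E A \<Phi> x \<longleftrightarrow> (\<forall>\<epsilon>>0. \<exists>\<delta>>0. ?stable \<delta> \<epsilon>)"
    unfolding equicont_point_def ..
  also have "\<dots> \<longleftrightarrow> (\<forall>k. \<exists>\<delta>>0. ?stable \<delta> ((1/2) ^ k))"
    by (rule all_pos_iff_all_half_powers) (meson cball_E_mono order_trans)
  also have "\<dots> \<longleftrightarrow> (\<forall>k. \<exists>D. finite D \<and> D \<subseteq> carrier G \<and> window_stable G A \<Phi> x D (word_ball G E k))"
    using ball_stable_iff_window_stable[OF E \<Phi>] by simp
  also have "\<dots> \<longleftrightarrow> finitary_equicont_point G A \<Phi> x"
    unfolding finitary_equicont_point_def
    by (rule all_word_balls_iff_all_finite[OF E]) (meson window_stable_mono order_refl)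
  finally show ?thesis .
qed

lemma (in group) not_sensitive_iff_finitary:
  assumes E: "sym_fin_gen G E" and \<Phi>: "\<Phi> \<in> configs G A \<rightarrow> configs G A"
  shows "\<not> sensitive G E A \<Phi> \<longleftrightarrow> finitary_nonsensitive G A \<Phi>"
proof -
  let ?stable = "\<lambda>x \<delta> \<epsilon>. \<forall>t. (\<Phi> ^^ t) ` cball_E G E A x \<delta> \<subseteq> cball_E G E A ((\<Phi> ^^ t) x) \<epsilon>"
  have "\<not> sensitive G E A \<Phi> \<longleftrightarrow> (\<forall>\<epsilon>>0. \<exists>x\<in>configs G A. \<exists>\<delta>>0. ?stable x \<delta> \<epsilon>)"
    unfolding sensitive_def by (auto simp: image_subset_iff)
  also have "\<dots> \<longleftrightarrow> (\<forall>k. \<exists>x\<in>configs G A. \<exists>\<delta>>0. ?stable x \<delta> ((1/2) ^ k))"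
    by (rule all_pos_iff_all_half_powers) (meson cball_E_mono order_trans)
  also have "\<dots> \<longleftrightarrow> (\<forall>k. \<exists>x\<in>configs G A. \<exists>D. finite D \<and> D \<subseteq> carrier G
                        \<and> window_stable G A \<Phi> x D (word_ball G E k))"
    using ball_stable_iff_window_stable[OF E \<Phi>] by simp
  also have "\<dots> \<longleftrightarrow> finitary_nonsensitive G A \<Phi>"
    unfolding finitary_nonsensitive_def
    by (rule all_word_balls_iff_all_finite[OF E]) (meson window_stable_mono order_refl)
  finally show ?thesis .
qed

lemma (in monoid) CA_funcset:
  assumes "local_rule G A S \<mu>"
  shows "CA G S \<mu> \<in> configs G A \<rightarrow> configs G A"
proof
  fix z assume z: "z \<in> configs G A"
  have S: "S \<subseteq> carrier G" and \<mu>: "\<mu> \<in> (S \<rightarrow>\<^sub>E A) \<rightarrow> A"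
    using assms unfolding local_rule_def by auto
  have "\<mu> (\<lambda>s\<in>S. z (g \<otimes> s)) \<in> A" if "g \<in> carrier G" for g
    using z S that by (intro funcset_mem[OF \<mu>]) (auto simp: configs_def restrict_PiE_iff)
  then show "CA G S \<mu> z \<in> configs G A"
    unfolding CA_def configs_def by (simp add: restrict_PiE_iff)
qed

(* Depends on g only through its coset gH, so it picks one representative per coset. *)
definition coset_rep :: "('g, 'b) monoid_scheme \<Rightarrow> 'g set \<Rightarrow> 'g \<Rightarrow> 'g" where
  "coset_rep G H g = (SOME r. r \<in> g <#\<^bsub>G\<^esub> H)"

definition coset_glue :: "('g, 'b) monoid_scheme \<Rightarrow> 'g set \<Rightarrow> ('g \<Rightarrow> 'g \<Rightarrow> nat) \<Rightarrow> 'g \<Rightarrow> nat" where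
  "coset_glue G H X =
     (\<lambda>g\<in>carrier G. X (coset_rep G H g) (inv\<^bsub>G\<^esub> (coset_rep G H g) \<otimes>\<^bsub>G\<^esub> g))"

context group
begin

context
  fixes H assumes H: "subgroup H G"
begin

lemma coset_rep_in_coset: "g \<in> carrier G \<Longrightarrow> coset_rep G H g \<in> g <# H"
  unfolding coset_rep_def
  by (rule someI[of _ g]) (force simp: l_coset_def intro: subgroup.one_closed[OF H])

lemma coset_rep_closed: "g \<in> carrier G \<Longrightarrow> coset_rep G H g \<in> carrier G"
  using coset_rep_in_coset l_coset_carrier H by blast

lemma coset_rep_inv_mult_mem:
  assumes "g \<in> carrier G"
  shows "inv (coset_rep G H g) \<otimes> g \<in> H"
proof -
  define r where "r = coset_rep G H g"
  have "g \<in> r <# H"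
    unfolding r_def using l_coset_swap[OF coset_rep_in_coset[OF assms] assms H] .
  then obtain h where "h \<in> H" "g = r \<otimes> h" unfolding l_coset_def by blast
  moreover have "r \<in> carrier G" unfolding r_def using assms by (rule coset_rep_closed)
  ultimately show ?thesis
    unfolding r_def[symmetric] using subgroup.mem_carrier[OF H] by (simp add: m_assoc[symmetric])
qed

lemma subset_UN_coset_translates:
  assumes "F \<subseteq> carrier G"
  shows "F \<subseteq> (\<Union>r\<in>coset_rep G H ` F. (\<otimes>) r ` ((\<otimes>) (inv r) ` F \<inter> H))"
proof
  fix f assume "f \<in> F"
  then have f: "f \<in> carrier G" using assms by blast
  let ?r = "coset_rep G H f"
  have "inv ?r \<otimes> f \<in> (\<otimes>) (inv ?r) ` F \<inter> H"
    using \<open>f \<in> F\<close> coset_rep_inv_mult_mem[OF f] by blast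
  moreover have "f = ?r \<otimes> (inv ?r \<otimes> f)"
    using f coset_rep_closed[OF f] by (simp add: m_assoc[symmetric])
  ultimately show "f \<in> (\<Union>r\<in>coset_rep G H ` F. (\<otimes>) r ` ((\<otimes>) (inv r) ` F \<inter> H))"
    using \<open>f \<in> F\<close> by blast
qed

lemma coset_rep_eq: "g \<in> carrier G \<Longrightarrow> g' \<in> g <# H \<Longrightarrow> coset_rep G H g' = coset_rep G H g"
  using l_repr_independence[OF _ _ H] unfolding coset_rep_def by metis

lemma coset_rep_mult:
  assumes "g \<in> carrier G" "h \<in> H"
  shows "coset_rep G H (coset_rep G H g \<otimes> h) = coset_rep G H g"
proof -
  let ?r = "coset_rep G H g"
  have "?r \<otimes> h \<in> ?r <# H" using assms(2) unfolding l_coset_def by blast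
  then have "coset_rep G H (?r \<otimes> h) = coset_rep G H ?r"
    by (rule coset_rep_eq[OF coset_rep_closed[OF assms(1)]])
  also have "\<dots> = ?r" by (rule coset_rep_eq[OF assms(1) coset_rep_in_coset[OF assms(1)]])
  finally show ?thesis .
qed

lemma restrict_coset_glue:
  assumes "g \<in> carrier G" "X (coset_rep G H g) \<in> configs (G\<lparr>carrier := H\<rparr>) A"
  shows "(\<lambda>h\<in>H. coset_glue G H X (coset_rep G H g \<otimes> h)) = X (coset_rep G H g)"
proof
  fix h
  let ?r = "coset_rep G H g"
  show "(\<lambda>h\<in>H. coset_glue G H X (?r \<otimes> h)) h = X ?r h"
  proof (cases "h \<in> H")
    case True
    then have "?r \<otimes> h \<in> carrier G" "inv ?r \<otimes> (?r \<otimes> h) = h"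
      using subgroup.mem_carrier[OF H] coset_rep_closed[OF assms(1)] by (auto simp: m_assoc[symmetric])
    then show ?thesis
      using True coset_rep_mult[OF assms(1) True] by (simp add: coset_glue_def)
  next
    case False
    have "X ?r \<in> H \<rightarrow>\<^sub>E A" using assms(2) by (simp add: configs_def)
    then have "X ?r h = undefined" using False by (rule PiE_arb)
    then show ?thesis using False by simp
  qed
qed

lemma coset_glue_configs:
  assumes "\<And>r. r \<in> carrier G \<Longrightarrow> X r \<in> configs (G\<lparr>carrier := H\<rparr>) A"
  shows "coset_glue G H X \<in> configs G A"
proof -
  have "X (coset_rep G H g) (inv (coset_rep G H g) \<otimes> g) \<in> A" if "g \<in> carrier G" for g
    using assms[OF coset_rep_closed[OF that]] coset_rep_inv_mult_mem[OF that]
    by (auto simp: configs_def)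
  then show ?thesis by (simp add: coset_glue_def configs_def restrict_PiE_iff)
qed

lemma CA_restrict_coset:
  assumes g: "g \<in> carrier G" and S: "S \<subseteq> H"
  shows "(\<lambda>h\<in>H. CA G S \<mu> w (g \<otimes> h)) = CA (G\<lparr>carrier := H\<rparr>) S \<mu> (\<lambda>h\<in>H. w (g \<otimes> h))"
proof -
  have "(\<lambda>s\<in>S. w (g \<otimes> h \<otimes> s)) = (\<lambda>s\<in>S. (\<lambda>h'\<in>H. w (g \<otimes> h')) (h \<otimes> s))" if h: "h \<in> H" for h
  proof (rule restrict_ext)
    fix s assume "s \<in> S"
    then have "s \<in> H" using S by blast
    then show "w (g \<otimes> h \<otimes> s) = (\<lambda>h'\<in>H. w (g \<otimes> h')) (h \<otimes> s)"
      using g h subgroup.m_closed[OF H] subgroup.mem_carrier[OF H] by (simp add: m_assoc)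
  qed
  then show ?thesis
    using g subgroup.mem_carrier[OF H] by (auto simp: CA_def intro!: restrict_ext)
qed

lemma CA_funpow_restrict_coset:
  assumes "g \<in> carrier G" "S \<subseteq> H"
  shows "(\<lambda>h\<in>H. (CA G S \<mu> ^^ t) z (g \<otimes> h)) = (CA (G\<lparr>carrier := H\<rparr>) S \<mu> ^^ t) (\<lambda>h\<in>H. z (g \<otimes> h))"
proof (induction t)
  case 0
  show ?case by simp
next
  case (Suc t)
  have "(\<lambda>h\<in>H. (CA G S \<mu> ^^ Suc t) z (g \<otimes> h))
      = CA (G\<lparr>carrier := H\<rparr>) S \<mu> (\<lambda>h\<in>H. (CA G S \<mu> ^^ t) z (g \<otimes> h))"
    unfolding funpow.simps comp_apply by (rule CA_restrict_coset[OF assms])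
  also have "\<dots> = (CA (G\<lparr>carrier := H\<rparr>) S \<mu> ^^ Suc t) (\<lambda>h\<in>H. z (g \<otimes> h))"
    unfolding Suc.IH by simp
  finally show ?case .
qed

lemma CA_funpow_restrict:
  assumes "S \<subseteq> H"
  shows "restrict ((CA G S \<mu> ^^ t) z) H = (CA (G\<lparr>carrier := H\<rparr>) S \<mu> ^^ t) (restrict z H)"
proof -
  have "(\<lambda>h\<in>H. f (\<one> \<otimes> h)) = restrict f H" for f
    using subgroup.mem_carrier[OF H] by (auto intro!: restrict_ext)
  then show ?thesis using CA_funpow_restrict_coset[OF one_closed assms] by metis
qed

lemma window_stable_coset_lift:
  assumes g: "g \<in> carrier G" and S: "S \<subseteq> H" and D: "D \<subseteq> H" and F: "F \<subseteq> H"
    and stable: "window_stable (G\<lparr>carrier := H\<rparr>) A (CA (G\<lparr>carrier := H\<rparr>) S \<mu>) (\<lambda>h\<in>H. x (g \<otimes> h)) D F"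
  shows "window_stable G A (CA G S \<mu>) x ((\<otimes>) g ` D) ((\<otimes>) g ` F)"
  unfolding window_stable_def
proof (intro allI ballI impI)
  fix t y assume y: "y \<in> configs G A" and agree: "agree_on ((\<otimes>) g ` D) x y"
  have "(\<lambda>h\<in>H. y (g \<otimes> h)) \<in> configs (G\<lparr>carrier := H\<rparr>) A"
    using y g subgroup.mem_carrier[OF H] by (auto simp: configs_def)
  moreover have "agree_on D (\<lambda>h\<in>H. x (g \<otimes> h)) (\<lambda>h\<in>H. y (g \<otimes> h))"
    using agree D by (auto simp: agree_on_def)
  ultimately have "agree_on F ((CA (G\<lparr>carrier := H\<rparr>) S \<mu> ^^ t) (\<lambda>h\<in>H. x (g \<otimes> h)))
                              ((CA (G\<lparr>carrier := H\<rparr>) S \<mu> ^^ t) (\<lambda>h\<in>H. y (g \<otimes> h)))"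
    using stable unfolding window_stable_def by blast
  then have restricted: "agree_on F (\<lambda>h\<in>H. (CA G S \<mu> ^^ t) x (g \<otimes> h))
                                 (\<lambda>h\<in>H. (CA G S \<mu> ^^ t) y (g \<otimes> h))"
    unfolding CA_funpow_restrict_coset[OF g S] .
  show "agree_on ((\<otimes>) g ` F) ((CA G S \<mu> ^^ t) x) ((CA G S \<mu> ^^ t) y)"
    unfolding agree_on_def
  proof
    fix f assume "f \<in> (\<otimes>) g ` F"
    then obtain h where h: "h \<in> F" "f = g \<otimes> h" by blast
    then have "(\<lambda>h\<in>H. (CA G S \<mu> ^^ t) x (g \<otimes> h)) h = (\<lambda>h\<in>H. (CA G S \<mu> ^^ t) y (g \<otimes> h)) h"
      using restricted unfolding agree_on_def by blast
    then show "(CA G S \<mu> ^^ t) x f = (CA G S \<mu> ^^ t) y f" using h F by auto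
  qed
qed

lemma window_stable_restrict:
  assumes S: "S \<subseteq> H" and x: "x \<in> configs G A" and D: "D \<subseteq> carrier G" and F: "F \<subseteq> H"
    and stable: "window_stable G A (CA G S \<mu>) x D F"
  shows "window_stable (G\<lparr>carrier := H\<rparr>) A (CA (G\<lparr>carrier := H\<rparr>) S \<mu>) (restrict x H) (D \<inter> H) F"
  unfolding window_stable_def
proof (intro allI ballI impI)
  fix t y' assume y': "y' \<in> configs (G\<lparr>carrier := H\<rparr>) A" and agree: "agree_on (D \<inter> H) (restrict x H) y'"
  define y where "y = (\<lambda>g\<in>carrier G. if g \<in> H then y' g else x g)"
  have "y \<in> configs G A"
    using x y' subgroup.mem_carrier[OF H] by (auto simp: y_def configs_def)
  moreover have "agree_on D x y"
    using agree D by (auto simp: agree_on_def y_def)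
  ultimately have "agree_on F ((CA G S \<mu> ^^ t) x) ((CA G S \<mu> ^^ t) y)"
    using stable unfolding window_stable_def by blast
  then have "agree_on F (restrict ((CA G S \<mu> ^^ t) x) H) (restrict ((CA G S \<mu> ^^ t) y) H)"
    using F by (auto simp: agree_on_def)
  moreover have "restrict y H = y'"
    using y' subgroup.mem_carrier[OF H] by (force simp: y_def configs_def PiE_def extensional_def)
  ultimately show "agree_on F ((CA (G\<lparr>carrier := H\<rparr>) S \<mu> ^^ t) (restrict x H))
                            ((CA (G\<lparr>carrier := H\<rparr>) S \<mu> ^^ t) y')"
    unfolding CA_funpow_restrict[OF S] by simp
qed

lemma window_stable_coset_glue:
  assumes S: "S \<subseteq> H" and g: "g \<in> carrier G" and X: "\<And>r. X r \<in> configs (G\<lparr>carrier := H\<rparr>) A"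
    and D: "D \<subseteq> H" and F: "F \<subseteq> H"
    and stable: "window_stable (G\<lparr>carrier := H\<rparr>) A (CA (G\<lparr>carrier := H\<rparr>) S \<mu>) (X (coset_rep G H g)) D F"
  shows "window_stable G A (CA G S \<mu>) (coset_glue G H X)
           ((\<otimes>) (coset_rep G H g) ` D) ((\<otimes>) (coset_rep G H g) ` F)"
proof (rule window_stable_coset_lift[OF coset_rep_closed[OF g] S D F])
  show "window_stable (G\<lparr>carrier := H\<rparr>) A (CA (G\<lparr>carrier := H\<rparr>) S \<mu>)
          (\<lambda>h\<in>H. coset_glue G H X (coset_rep G H g \<otimes> h)) D F"
    unfolding restrict_coset_glue[OF g X] by (rule stable)
qed

lemma finitary_nonsensitive_lift:
  assumes S: "S \<subseteq> H"
    and ns: "finitary_nonsensitive (G\<lparr>carrier := H\<rparr>) A (CA (G\<lparr>carrier := H\<rparr>) S \<mu>)"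
  shows "finitary_nonsensitive G A (CA G S \<mu>)"
  unfolding finitary_nonsensitive_def
proof (intro allI impI, elim conjE)
  fix F assume F: "finite F" "F \<subseteq> carrier G"
  define Fr where "Fr r = (\<otimes>) (inv r) ` F \<inter> H" for r
  have "\<exists>X D. X \<in> configs (G\<lparr>carrier := H\<rparr>) A \<and> finite D \<and> D \<subseteq> H
      \<and> window_stable (G\<lparr>carrier := H\<rparr>) A (CA (G\<lparr>carrier := H\<rparr>) S \<mu>) X D (Fr r)" for r
  proof -
    have "finite (Fr r) \<and> Fr r \<subseteq> carrier (G\<lparr>carrier := H\<rparr>)" using F(1) by (simp add: Fr_def)
    then obtain X D where "X \<in> configs (G\<lparr>carrier := H\<rparr>) A" "finite D" "D \<subseteq> carrier (G\<lparr>carrier := H\<rparr>)"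
        "window_stable (G\<lparr>carrier := H\<rparr>) A (CA (G\<lparr>carrier := H\<rparr>) S \<mu>) X D (Fr r)"
      using ns unfolding finitary_nonsensitive_def by blast
    then show ?thesis by auto
  qed
  then obtain X D where X: "\<And>r. X r \<in> configs (G\<lparr>carrier := H\<rparr>) A"
    and D: "\<And>r. finite (D r)" "\<And>r. D r \<subseteq> H"
    and stable: "\<And>r. window_stable (G\<lparr>carrier := H\<rparr>) A (CA (G\<lparr>carrier := H\<rparr>) S \<mu>) (X r) (D r) (Fr r)"
    by metis
  define R where "R = coset_rep G H ` F"
  have R: "r \<in> carrier G" if "r \<in> R" for r
    using that F(2) coset_rep_closed unfolding R_def by blast
  have "window_stable G A (CA G S \<mu>) (coset_glue G H X) ((\<otimes>) r ` D r) ((\<otimes>) r ` Fr r)" if r: "r \<in> R" for r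
  proof -
    obtain f where f: "f \<in> carrier G" "r = coset_rep G H f" using r F(2) unfolding R_def by blast
    have "Fr (coset_rep G H f) \<subseteq> H" unfolding Fr_def by blast
    from window_stable_coset_glue[where X = X, OF S f(1) X D(2) this stable]
    show ?thesis unfolding f(2) .
  qed
  then have stable_UN: "window_stable G A (CA G S \<mu>) (coset_glue G H X)
                          (\<Union>r\<in>R. (\<otimes>) r ` D r) (\<Union>r\<in>R. (\<otimes>) r ` Fr r)"
    by (rule window_stable_UN)
  have cover: "F \<subseteq> (\<Union>r\<in>R. (\<otimes>) r ` Fr r)"
    unfolding R_def Fr_def by (rule subset_UN_coset_translates[OF F(2)])
  have "finite (\<Union>r\<in>R. (\<otimes>) r ` D r)" using F(1) D(1) by (simp add: R_def)
  moreover have "(\<Union>r\<in>R. (\<otimes>) r ` D r) \<subseteq> carrier G"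
    using R D(2) subgroup.mem_carrier[OF H] by (auto intro!: m_closed)
  moreover have "window_stable G A (CA G S \<mu>) (coset_glue G H X) (\<Union>r\<in>R. (\<otimes>) r ` D r) F"
    using stable_UN order_refl cover by (rule window_stable_mono)
  moreover have "coset_glue G H X \<in> configs G A" using X by (rule coset_glue_configs)
  ultimately show "\<exists>x\<in>configs G A. \<exists>D. finite D \<and> D \<subseteq> carrier G \<and> window_stable G A (CA G S \<mu>) x D F"
    by blast
qed

lemma restrict_configs: "x \<in> configs G A \<Longrightarrow> restrict x H \<in> configs (G\<lparr>carrier := H\<rparr>) A"
  using subgroup.mem_carrier[OF H] by (auto simp: configs_def)

lemma finitary_equicont_point_restrict:
  assumes S: "S \<subseteq> H" and x: "x \<in> configs G A" and eq: "finitary_equicont_point G A (CA G S \<mu>) x"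
  shows "finitary_equicont_point (G\<lparr>carrier := H\<rparr>) A (CA (G\<lparr>carrier := H\<rparr>) S \<mu>) (restrict x H)"
  unfolding finitary_equicont_point_def
proof (intro allI impI, elim conjE)
  fix F assume "finite F" "F \<subseteq> carrier (G\<lparr>carrier := H\<rparr>)"
  then have F: "finite F" "F \<subseteq> H" by simp_all
  then have "F \<subseteq> carrier G" using subgroup.subset[OF H] by blast
  then obtain D where D: "finite D" "D \<subseteq> carrier G" and stable: "window_stable G A (CA G S \<mu>) x D F"
    using eq F(1) unfolding finitary_equicont_point_def by blast
  have "window_stable (G\<lparr>carrier := H\<rparr>) A (CA (G\<lparr>carrier := H\<rparr>) S \<mu>) (restrict x H) (D \<inter> H) F"
    by (rule window_stable_restrict[OF S x D(2) F(2) stable])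
  moreover have "finite (D \<inter> H)" "D \<inter> H \<subseteq> carrier (G\<lparr>carrier := H\<rparr>)" using D(1) by simp_all
  ultimately show "\<exists>D. finite D \<and> D \<subseteq> carrier (G\<lparr>carrier := H\<rparr>)
      \<and> window_stable (G\<lparr>carrier := H\<rparr>) A (CA (G\<lparr>carrier := H\<rparr>) S \<mu>) (restrict x H) D F"
    by blast
qed

lemma local_rule_supergroup: "local_rule (G\<lparr>carrier := H\<rparr>) A S \<mu> \<Longrightarrow> local_rule G A S \<mu>"
  using subgroup.subset[OF H] by (auto simp: local_rule_def)

end

lemma not_sensitive_supergroup:
  assumes H: "subgroup H G" and EG: "sym_fin_gen G EG" and E: "sym_fin_gen (G\<lparr>carrier := H\<rparr>) E"
    and rule: "local_rule (G\<lparr>carrier := H\<rparr>) A S \<mu>"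
    and ns: "\<not> sensitive (G\<lparr>carrier := H\<rparr>) E A (CA (G\<lparr>carrier := H\<rparr>) S \<mu>)"
  shows "\<not> sensitive G EG A (CA G S \<mu>)"
proof -
  interpret sub: group "G\<lparr>carrier := H\<rparr>" using subgroup.subgroup_is_group[OF H is_group] .
  have S: "S \<subseteq> H" using rule by (simp add: local_rule_def)
  have "finitary_nonsensitive (G\<lparr>carrier := H\<rparr>) A (CA (G\<lparr>carrier := H\<rparr>) S \<mu>)"
    using ns sub.not_sensitive_iff_finitary[OF E sub.CA_funcset[OF rule]] by simp
  then have "finitary_nonsensitive G A (CA G S \<mu>)"
    by (rule finitary_nonsensitive_lift[OF H S])
  then show ?thesis
    using not_sensitive_iff_finitary[OF EG CA_funcset[OF local_rule_supergroup[OF H rule]]] by simp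
qed

lemma equicont_point_restrict:
  assumes H: "subgroup H G" and EG: "sym_fin_gen G EG" and E: "sym_fin_gen (G\<lparr>carrier := H\<rparr>) E"
    and rule: "local_rule (G\<lparr>carrier := H\<rparr>) A S \<mu>"
    and x: "x \<in> configs G A" and eq: "equicont_point G EG A (CA G S \<mu>) x"
  shows "equicont_point (G\<lparr>carrier := H\<rparr>) E A (CA (G\<lparr>carrier := H\<rparr>) S \<mu>) (restrict x H)"
proof -
  interpret sub: group "G\<lparr>carrier := H\<rparr>" using subgroup.subgroup_is_group[OF H is_group] .
  have S: "S \<subseteq> H" using rule by (simp add: local_rule_def)
  have "finitary_equicont_point G A (CA G S \<mu>) x"
    using eq equicont_point_iff_finitary[OF EG CA_funcset[OF local_rule_supergroup[OF H rule]]] by simp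
  then have "finitary_equicont_point (G\<lparr>carrier := H\<rparr>) A (CA (G\<lparr>carrier := H\<rparr>) S \<mu>) (restrict x H)"
    by (rule finitary_equicont_point_restrict[OF H S x])
  then show ?thesis
    by (rule sub.equicont_point_iff_finitary[OF E sub.CA_funcset[OF rule], THEN iffD2])
qed

end

theorem corollary1:
  fixes G :: "('g, 'b) monoid_scheme" and H :: "'g set"
  assumes "fin_gen_group G"
    and "kurka_dichotomy G"
    and "subgroup H G"
    and "fin_gen_group (G\<lparr>carrier := H\<rparr>)"
  shows "kurka_dichotomy (G\<lparr>carrier := H\<rparr>)"
  unfolding kurka_dichotomy_def
proof (intro allI impI, elim conjE)
  interpret group G using assms(1) by (simp add: fin_gen_group_def)
  obtain EG where EG: "sym_fin_gen G EG" using assms(1) by (auto simp: fin_gen_group_def)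
  fix A E S \<mu>
  assume "finite A" and E: "sym_fin_gen (G\<lparr>carrier := H\<rparr>) E"
    and rule: "local_rule (G\<lparr>carrier := H\<rparr>) A S \<mu>"
    and ns: "\<not> sensitive (G\<lparr>carrier := H\<rparr>) E A (CA (G\<lparr>carrier := H\<rparr>) S \<mu>)"
  have "\<not> sensitive G EG A (CA G S \<mu>)"
    by (rule not_sensitive_supergroup[OF assms(3) EG E rule ns])
  then obtain x where "x \<in> configs G A" and "equicont_point G EG A (CA G S \<mu>) x"
    using assms(2) \<open>finite A\<close> EG local_rule_supergroup[OF assms(3) rule]
    unfolding kurka_dichotomy_def by blast
  then show "\<exists>x\<in>configs (G\<lparr>carrier := H\<rparr>) A.
      equicont_point (G\<lparr>carrier := H\<rparr>) E A (CA (G\<lparr>carrier := H\<rparr>) S \<mu>) x"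
    using equicont_point_restrict[OF assms(3) EG E rule] restrict_configs[OF assms(3)] by blast
qed

end
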